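(* Let $\beta<0$, $G_\beta(u)=-u^\beta$, $L\in\mathbb{N}$, $d>0$ and $u_0\in\mathcal{P}_{L,d}$. For $\delta>0$ let $u_{0,\delta}=u_0\vee\delta$ and let $u_\delta$ be a solution of $\partial_tu=\Delta G_\beta(u)$, $u(0)=u_{0,\delta}$, with $\delta\le u_\delta\le\|u_{0,\delta}\|_\infty$. Then there exist $t^*=t^*(\beta,L,d)>0$ and $C=C(\beta,L,d)$ such that $|u_\delta(t_2,k)-u_\delta(t_1,k)|\le C|t_2-t_1|^{\frac1{1-\beta}}$ for all $t_1,t_2\in[0,t^*]$, $k\in\mathbb{Z}$, and all $\delta>0$.
   Context: $\Delta v(k)=v(k-1)-2v(k)+v(k+1)$. $\sigma_+(u,k,d)=\inf\{l>k:u(l)\ge d\}$; $\mathcal{P}_{L,d}=\{u\in\ell^\infty_+(\mathbb{Z}):\sup_k(\sigma_+(u,k,d)-k)\le L\}$. A solution: $u\in C^0([0,\infty);\ell^\infty_+(\mathbb{Z}))$ with the initial datum, each $u(\cdot,k)\in C^1((0,\infty);(0,\infty))$ satisfying the equation pointwise. *)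

theory Defs
  imports "HOL-Analysis.Analysis"
begin

definition dlap :: "(int \<Rightarrow> real) \<Rightarrow> int \<Rightarrow> real" where
  "dlap v k = v (k - 1) - 2 * v k + v (k + 1)"

definition G :: "real \<Rightarrow> real \<Rightarrow> real" where
  "G \<beta> x = - (x powr \<beta>)"

definition linf_plus :: "(int \<Rightarrow> real) set" where
  "linf_plus = {u. (\<forall>k. 0 \<le> u k) \<and> bounded (range u)}"

definition supnorm :: "(int \<Rightarrow> real) \<Rightarrow> real" where
  "supnorm u = (SUP k. \<bar>u k\<bar>)"

text \<open>sigma_+(u,k,d) = inf {l > k. u l \<ge> d}, with inf of the empty set = +infinity.\<close>
definition sigma_plus :: "(int \<Rightarrow> real) \<Rightarrow> int \<Rightarrow> real \<Rightarrow> ereal" where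
  "sigma_plus u k d = Inf ((\<lambda>l. ereal (real_of_int l)) ` {l. k < l \<and> d \<le> u l})"

definition P_set :: "nat \<Rightarrow> real \<Rightarrow> (int \<Rightarrow> real) set" where
  "P_set L d = {u \<in> linf_plus.
     (SUP k. sigma_plus u k d - ereal (real_of_int k)) \<le> ereal (real L)}"

definition is_solution :: "real \<Rightarrow> (int \<Rightarrow> real) \<Rightarrow> (real \<Rightarrow> int \<Rightarrow> real) \<Rightarrow> bool" where
  "is_solution \<beta> v0 u \<longleftrightarrow>
     u 0 = v0 \<and>
     (\<forall>t\<ge>0. u t \<in> linf_plus) \<and>
     (\<forall>t\<ge>0. ((\<lambda>s. supnorm (\<lambda>k. u s k - u t k)) \<longlongrightarrow> 0) (at t within {0..})) \<and>
     (\<forall>k. \<exists>u'. (\<forall>t>0. ((\<lambda>s. u s k) has_real_derivative u' t) (at t))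
               \<and> continuous_on {0<..} u'
               \<and> (\<forall>t>0. u t k > 0)
               \<and> (\<forall>t>0. u' t = dlap (\<lambda>j. G \<beta> (u t j)) k))"

end

theory Submission
  imports Defs
begin

text \<open>For \<open>\<beta> < 0\<close> the map \<open>u \<mapsto> - u\<^sup>\<beta>\<close> is increasing, so the lattice equation obeys a comparison
  principle. In \<open>P_set L d\<close> every site lies fewer than \<open>L\<close> steps to the left of a site where the
  datum is at least \<open>d\<close>; a subsolution built from this distance yields, uniformly in \<open>\<delta>\<close>, the
  lower bound \<open>u(t,k) \<ge> c t\<^sup>\<alpha>\<close> with \<open>\<alpha> = 1/(1 - \<beta>)\<close> for \<open>t \<le> t\<^sup>*\<close>. Since \<open>\<Delta>(- u\<^sup>\<beta>) \<le> 2 u\<^sup>\<beta>\<close>, the power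
  \<open>u\<^sup>1\<^sup>-\<^sup>\<beta>\<close> grows at most linearly, which gives the Hoelder bound from above; the lower bound
  turns \<open>\<Delta>(- u\<^sup>\<beta>) \<ge> - 2 (c t\<^sup>\<alpha>)\<^sup>\<beta>\<close> into the Hoelder bound from below.\<close>

section \<open>A comparison principle on the lattice\<close>

lemma growth_bound_from_nonpos:
  fixes f D :: "real \<Rightarrow> real" and s r K :: real
  assumes sr: "s \<le> r" and cont: "continuous_on {s..r} f"
    and der: "\<And>x. s < x \<Longrightarrow> x < r \<Longrightarrow> (f has_real_derivative D x) (at x)"
    and f0: "f s \<le> 0"
    and Db: "\<And>x. s < x \<Longrightarrow> x < r \<Longrightarrow> f x > 0 \<Longrightarrow> D x \<le> K"
    and K: "K \<ge> 0"
  shows "f r \<le> K * (r - s)"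
proof (rule ccontr)
  assume "\<not> ?thesis"
  hence fr: "f r > K * (r - s)" by simp
  have fr0: "f r > 0" using fr K sr by (smt (verit) mult_nonneg_nonneg)
  define A where "A = {s..r} \<inter> f -` {..0}"
  have bA: "bdd_above A" unfolding A_def by (rule bdd_aboveI[of _ r]) auto
  define r0 where "r0 = Sup A"
  have "r0 \<in> A"
    unfolding r0_def
  proof (rule closed_contains_Sup[OF _ bA])
    show "A \<noteq> {}" using f0 sr by (auto simp: A_def)
    show "closed A" unfolding A_def by (rule continuous_closed_preimage[OF cont]) auto
  qed
  hence r0: "s \<le> r0" "r0 \<le> r" "f r0 \<le> 0" by (auto simp: A_def)
  have pos: "f x > 0" if "r0 < x" "x \<le> r" for x
  proof (rule ccontr)
    assume "\<not> f x > 0"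
    hence "x \<in> A" using that r0 by (auto simp: A_def)
    hence "x \<le> r0" unfolding r0_def by (rule cSup_upper[OF _ bA])
    thus False using that by simp
  qed
  have "K * r0 - f r0 \<le> K * r - f r"
  proof (rule DERIV_nonneg_imp_increasing_open[of r0 r "\<lambda>x. K * x - f x"])
    show "r0 \<le> r" using r0 by simp
    fix x assume x: "r0 < x" "x < r"
    have "((\<lambda>x. K * x - f x) has_real_derivative K - D x) (at x)"
      using der[of x] x r0 by (auto intro!: derivative_eq_intros)
    moreover have "K - D x \<ge> 0" using Db[of x] pos[of x] x r0 by auto
    ultimately show "\<exists>y. ((\<lambda>x. K * x - f x) has_real_derivative y) (at x) \<and> 0 \<le> y" by blast
  next
    show "continuous_on {r0..r} (\<lambda>x. K * x - f x)"
      using cont r0 by (auto intro!: continuous_intros elim: continuous_on_subset)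
  qed
  hence "f r \<le> f r0 + K * (r - r0)" by (simp add: algebra_simps)
  also have "\<dots> \<le> K * (r - s)" using r0 K by (smt (verit) mult_left_mono)
  finally show False using fr by simp
qed

text \<open>On a window of length \<open>1 / (4 * \<Lambda>)\<close> the supremum \<open>E\<close> of the positive parts can only
  grow from \<open>0\<close> to \<open>E / 2\<close>, so \<open>E = 0\<close>.\<close>

lemma lattice_comparison_short_time:
  fixes e D :: "real \<Rightarrow> int \<Rightarrow> real" and T \<Lambda> B s r :: real
  assumes \<Lambda>: "\<Lambda> > 0"
    and cont: "\<And>j. continuous_on {0..T} (\<lambda>t. e t j)"
    and der: "\<And>j t. 0 < t \<Longrightarrow> t < T \<Longrightarrow> ((\<lambda>t. e t j) has_real_derivative D t j) (at t)"
    and Db: "\<And>j t. 0 < t \<Longrightarrow> t < T \<Longrightarrow> e t j > 0 \<Longrightarrow>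
               D t j \<le> \<Lambda> * (max 0 (e t (j - 1)) + max 0 (e t (j + 1)))"
    and bnd: "\<And>j t. 0 \<le> t \<Longrightarrow> t \<le> T \<Longrightarrow> e t j \<le> B"
    and s: "0 \<le> s" "s \<le> T" and es: "\<And>j. e s j \<le> 0"
    and r: "s \<le> r" "r \<le> min (s + 1 / (4 * \<Lambda>)) T"
  shows "e r j \<le> 0"
proof -
  define s1 where "s1 = min (s + 1 / (4 * \<Lambda>)) T"
  define S where "S = {max 0 (e r j) | r j. r \<in> {s..s1}}"
  have "max 0 (e s 0) \<in> S" using s \<Lambda> unfolding S_def s1_def by auto
  hence Sne: "S \<noteq> {}" by blast
  have Sbdd: "bdd_above S"
  proof (rule bdd_aboveI[of _ "max 0 B"])
    fix x assume "x \<in> S"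
    then obtain r j where "x = max 0 (e r j)" "s \<le> r" "r \<le> T" by (auto simp: S_def s1_def)
    thus "x \<le> max 0 B" using bnd[of r j] s by auto
  qed
  define E where "E = Sup S"
  have inS: "max 0 (e r j) \<le> E" if "s \<le> r" "r \<le> s1" for r j
    unfolding E_def by (rule cSup_upper[OF _ Sbdd]) (use that in \<open>auto simp: S_def\<close>)
  have E0: "E \<ge> 0" using inS[of s 0] s \<Lambda> by (smt (verit) s1_def divide_pos_pos)
  have grow: "e r j \<le> (2 * \<Lambda> * E) * (r - s)" if r: "s \<le> r" "r \<le> s1" for r j
  proof (rule growth_bound_from_nonpos[where f="\<lambda>t. e t j" and D="\<lambda>t. D t j"])
    show "continuous_on {s..r} (\<lambda>t. e t j)"
      using cont[of j] by (rule continuous_on_subset) (use r s s1_def in auto)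
    show "((\<lambda>t. e t j) has_real_derivative D x j) (at x)" if "s < x" "x < r" for x
      using der[of x j] that r s s1_def by auto
    show "D x j \<le> 2 * \<Lambda> * E" if "s < x" "x < r" "e x j > 0" for x
    proof -
      have "D x j \<le> \<Lambda> * (max 0 (e x (j - 1)) + max 0 (e x (j + 1)))"
        using Db[of x j] that r s s1_def by auto
      also have "\<dots> \<le> \<Lambda> * (E + E)"
        using inS[of x "j - 1"] inS[of x "j + 1"] that r \<Lambda>
        by (intro mult_left_mono add_mono) auto
      finally show ?thesis by simp
    qed
  qed (use r E0 \<Lambda> es in auto)
  have half: "max 0 (e r j) \<le> E / 2" if r: "s \<le> r" "r \<le> s1" for r j
  proof -
    have "(2 * \<Lambda> * E) * (r - s) \<le> (2 * \<Lambda> * E) * (1 / (4 * \<Lambda>))"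
      using r E0 \<Lambda> by (intro mult_left_mono) (auto simp: s1_def)
    also have "\<dots> = E / 2" using \<Lambda> by (simp add: field_simps)
    finally show ?thesis using grow[OF r, of j] E0 by simp
  qed
  have "E \<le> E / 2" unfolding E_def
    by (rule cSup_least[OF Sne]) (use half in \<open>auto simp: S_def E_def\<close>)
  thus "e r j \<le> 0" using inS[of r j] r unfolding s1_def by linarith
qed

lemma lattice_comparison:
  fixes e D :: "real \<Rightarrow> int \<Rightarrow> real" and T \<Lambda> B :: real
  assumes \<Lambda>: "\<Lambda> > 0"
    and cont: "\<And>j. continuous_on {0..T} (\<lambda>t. e t j)"
    and der: "\<And>j t. 0 < t \<Longrightarrow> t < T \<Longrightarrow> ((\<lambda>t. e t j) has_real_derivative D t j) (at t)"
    and Db: "\<And>j t. 0 < t \<Longrightarrow> t < T \<Longrightarrow> e t j > 0 \<Longrightarrow>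
               D t j \<le> \<Lambda> * (max 0 (e t (j - 1)) + max 0 (e t (j + 1)))"
    and bnd: "\<And>j t. 0 \<le> t \<Longrightarrow> t \<le> T \<Longrightarrow> e t j \<le> B"
    and init: "\<And>j. e 0 j \<le> 0"
    and t: "0 \<le> t" "t \<le> T"
  shows "e t j \<le> 0"
proof -
  define h where "h = 1 / (4 * \<Lambda>)"
  have h: "h > 0" using \<Lambda> by (simp add: h_def)
  have P: "\<forall>j t. 0 \<le> t \<longrightarrow> t \<le> min (real n * h) T \<longrightarrow> e t j \<le> 0" for n
  proof (induction n)
    case 0
    then show ?case using init by (auto simp: min_def)
  next
    case (Suc n)
    show ?case
    proof (intro allI impI)
      fix j t assume t: "0 \<le> t" "t \<le> min (real (Suc n) * h) T"
      show "e t j \<le> 0"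
      proof (cases "t \<le> min (real n * h) T")
        case True thus ?thesis using Suc.IH t by blast
      next
        case False
        have sT: "0 \<le> real n * h" "real n * h \<le> T" using False t h by auto
        have "real (Suc n) * h = real n * h + h" by (simp add: algebra_simps)
        hence "real n * h \<le> t" "t \<le> min (real n * h + 1 / (4 * \<Lambda>)) T"
          using False t by (auto simp: h_def)
        moreover have "e (real n * h) j' \<le> 0" for j' using Suc.IH sT by auto
        ultimately show ?thesis
          using lattice_comparison_short_time[OF \<Lambda> cont der Db bnd sT] by blast
      qed
    qed
  qed
  obtain n :: nat where "T / h \<le> real n" using real_arch_simple by blast
  hence "T \<le> real n * h" using h by (simp add: field_simps)
  thus ?thesis using P[of n] t by (auto simp: min_def)
qed

lemma powr_add_le_add_powr:
  fixes x y a :: real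
  assumes "0 \<le> x" "0 \<le> y" "0 < a" "a \<le> 1"
  shows "(x + y) powr a \<le> x powr a + y powr a"
proof (cases "x + y = 0")
  case True thus ?thesis using assms by simp
next
  case False
  hence xy: "x + y > 0" using assms by simp
  have h1: "x / (x + y) \<le> (x / (x + y)) powr a"
    using powr_mono'[of a 1 "x / (x + y)"] assms xy by simp
  have h2: "y / (x + y) \<le> (y / (x + y)) powr a"
    using powr_mono'[of a 1 "y / (x + y)"] assms xy by simp
  have "(x + y) powr a = (x + y) powr a * (x / (x + y) + y / (x + y))"
    using xy by (simp add: add_divide_distrib[symmetric])
  also have "\<dots> \<le> (x + y) powr a * ((x / (x + y)) powr a + (y / (x + y)) powr a)"
    using h1 h2 by (intro mult_left_mono add_mono) auto
  also have "\<dots> = x powr a + y powr a"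
    using xy assms by (simp add: powr_divide distrib_left)
  finally show ?thesis .
qed

lemma powr_neg_diff_le:
  fixes \<beta> \<delta> x y :: real
  assumes b: "\<beta> < 0" and \<delta>: "0 < \<delta>" "\<delta> \<le> x" and y: "0 < y"
  shows "x powr \<beta> - y powr \<beta> \<le> (- \<beta> * \<delta> powr (\<beta> - 1)) * max 0 (y - x)"
proof (cases "y \<le> x")
  case True
  hence "x powr \<beta> \<le> y powr \<beta>" using powr_mono2'[of \<beta> y x] b y by simp
  thus ?thesis using True by simp
next
  case False
  have "\<exists>z. x < z \<and> z < y \<and> y powr \<beta> - x powr \<beta> = (y - x) * (\<beta> * z powr (\<beta> - 1))"
    by (rule MVT2) (use False \<delta> in \<open>auto intro!: has_real_derivative_powr\<close>)
  then obtain z where z: "x < z" "z < y" "y powr \<beta> - x powr \<beta> = (y - x) * (\<beta> * z powr (\<beta> - 1))"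
    by blast
  have "z powr (\<beta> - 1) \<le> \<delta> powr (\<beta> - 1)" using powr_mono2'[of "\<beta> - 1" \<delta> z] b \<delta> z by simp
  have "x powr \<beta> - y powr \<beta> = (y - x) * (- \<beta> * z powr (\<beta> - 1))" using z by simp
  also have "\<dots> \<le> (y - x) * (- \<beta> * \<delta> powr (\<beta> - 1))"
    using \<open>z powr (\<beta> - 1) \<le> \<delta> powr (\<beta> - 1)\<close> False b by (intro mult_left_mono) auto
  finally show ?thesis using False by (simp add: mult.commute)
qed

lemma continuous_on_powr_pos_exponent:
  assumes "0 < a" shows "continuous_on {0..T} (\<lambda>t::real. t powr a)"
  by (rule continuous_on_powr') (use assms in \<open>auto intro: continuous_intros\<close>)

lemma is_solution_has_real_derivative:
  assumes "is_solution \<beta> v0 u" and "0 < t"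
  shows "((\<lambda>s. u s k) has_real_derivative dlap (\<lambda>j. G \<beta> (u t j)) k) (at t)"
proof -
  obtain u' where "\<forall>t>0. ((\<lambda>s. u s k) has_real_derivative u' t) (at t)"
    "\<forall>t>0. u' t = dlap (\<lambda>j. G \<beta> (u t j)) k"
    using assms(1) unfolding is_solution_def by meson
  thus ?thesis using assms(2) by auto
qed

lemma is_solution_tendsto_0:
  assumes sol: "is_solution \<beta> v0 u"
  shows "((\<lambda>s. u s k) \<longlongrightarrow> u 0 k) (at 0 within {0..})"
proof -
  have lim: "((\<lambda>s. supnorm (\<lambda>k. u s k - u 0 k)) \<longlongrightarrow> 0) (at 0 within {0..})"
    using sol unfolding is_solution_def by auto
  have "eventually (\<lambda>s. s \<in> {0::real..}) (at 0 within {0..})"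
    by (simp add: eventually_at_filter)
  hence "\<forall>\<^sub>F s in at 0 within {0..}. norm (u s k - u 0 k) \<le> norm (supnorm (\<lambda>k. u s k - u 0 k)) * 1"
  proof eventually_elim
    case (elim s)
    have "bounded (range (u s))" "bounded (range (u 0))"
      using sol elim by (auto simp: is_solution_def linf_plus_def)
    then obtain a b where a: "\<And>j. \<bar>u s j\<bar> \<le> a" and b: "\<And>j. \<bar>u 0 j\<bar> \<le> b"
      unfolding bounded_iff by auto
    have "\<bar>u s j - u 0 j\<bar> \<le> a + b" for j using a[of j] b[of j] by linarith
    hence "bdd_above (range (\<lambda>k. \<bar>u s k - u 0 k\<bar>))" by (intro bdd_aboveI2)
    hence "\<bar>u s k - u 0 k\<bar> \<le> supnorm (\<lambda>k. u s k - u 0 k)"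
      unfolding supnorm_def by (rule cSUP_upper[rotated]) simp
    thus ?case by simp
  qed
  hence "((\<lambda>s. u s k - u 0 k) \<longlongrightarrow> 0) (at 0 within {0..})"
    by (rule tendsto_0_le[OF lim])
  thus ?thesis by (simp add: LIM_zero_iff)
qed

lemma is_solution_continuous_on:
  assumes sol: "is_solution \<beta> v0 u"
  shows "continuous_on {0..T} (\<lambda>s. u s k)"
proof (rule continuous_on_eq_continuous_within[THEN iffD2], intro ballI)
  fix x assume x: "x \<in> {0..T}"
  show "continuous (at x within {0..T}) (\<lambda>s. u s k)"
  proof (cases "x = 0")
    case True
    have "continuous (at 0 within {0..}) (\<lambda>s. u s k)"
      using is_solution_tendsto_0[OF sol] by (simp add: continuous_within)
    thus ?thesis using True by (rule_tac continuous_within_subset) auto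
  next
    case False
    hence "0 < x" using x by simp
    thus ?thesis
      using DERIV_isCont[OF is_solution_has_real_derivative[OF sol]]
      by (simp add: continuous_at_imp_continuous_within)
  qed
qed

lemma dlap_G: "dlap (\<lambda>j. G \<beta> (v j)) k = 2 * v k powr \<beta> - v (k - 1) powr \<beta> - v (k + 1) powr \<beta>"
  by (simp add: dlap_def G_def)

section \<open>Distance to the next large value of the datum\<close>

lemma P_set_level_within:
  assumes "u0 \<in> P_set L d"
  shows "\<exists>l. k < l \<and> l \<le> k + int L \<and> d \<le> u0 l"
proof (rule ccontr)
  assume H: "\<not> ?thesis"
  have le: "sigma_plus u0 k d - ereal (real_of_int k) \<le> ereal (real L)"
    using assms unfolding P_set_def by (auto simp: SUP_le_iff)
  have ge: "ereal (real_of_int (k + int L + 1)) \<le> sigma_plus u0 k d"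
    unfolding sigma_plus_def
  proof (rule Inf_greatest)
    fix x assume "x \<in> (\<lambda>l. ereal (real_of_int l)) ` {l. k < l \<and> d \<le> u0 l}"
    then obtain l where "x = ereal (real_of_int l)" "k < l" "d \<le> u0 l" by auto
    moreover have "k + int L + 1 \<le> l"
    proof (rule ccontr)
      assume "\<not> k + int L + 1 \<le> l"
      thus False using H \<open>k < l\<close> \<open>d \<le> u0 l\<close> by auto
    qed
    ultimately show "ereal (real_of_int (k + int L + 1)) \<le> x" by simp
  qed
  show False using le ge by (cases "sigma_plus u0 k d") auto
qed

lemma P_set_level_ahead:
  assumes "u0 \<in> P_set L d"
  shows "\<exists>n. d \<le> u0 (j + int n)"
proof -
  obtain l where "j - 1 < l" "d \<le> u0 l" using P_set_level_within[OF assms] by blast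
  hence "d \<le> u0 (j + int (nat (l - j)))" by simp
  thus ?thesis by blast
qed

definition level_dist :: "(int \<Rightarrow> real) \<Rightarrow> real \<Rightarrow> int \<Rightarrow> nat" where
  "level_dist u0 d j = (LEAST n. d \<le> u0 (j + int n))"

lemma level_dist_less:
  assumes "\<And>k. \<exists>l. k < l \<and> l \<le> k + int L \<and> d \<le> u0 l"
  shows "level_dist u0 d j < L"
proof -
  obtain l where l: "j - 1 < l" "l \<le> j - 1 + int L" "d \<le> u0 l" using assms by blast
  have "d \<le> u0 (j + int (nat (l - j)))" using l by simp
  hence "level_dist u0 d j \<le> nat (l - j)" unfolding level_dist_def by (rule Least_le)
  thus ?thesis using l by linarith
qed

lemma level_dist_eq_0_iff:
  assumes "\<exists>n. d \<le> u0 (j + int n)"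
  shows "level_dist u0 d j = 0 \<longleftrightarrow> d \<le> u0 j"
proof
  assume "level_dist u0 d j = 0"
  moreover have "d \<le> u0 (j + int (level_dist u0 d j))"
    using assms unfolding level_dist_def by (rule LeastI_ex)
  ultimately show "d \<le> u0 j" by simp
next
  assume "d \<le> u0 j" thus "level_dist u0 d j = 0" unfolding level_dist_def by (intro Least_eq_0) simp
qed

lemma level_dist_diff:
  assumes "\<exists>n. d \<le> u0 (j + int n)"
  shows "level_dist u0 d (j - 1) = (if d \<le> u0 (j - 1) then 0 else Suc (level_dist u0 d j))"
proof (cases "d \<le> u0 (j - 1)")
  case True thus ?thesis unfolding level_dist_def by (simp add: Least_eq_0)
next
  case False
  obtain n where "d \<le> u0 (j + int n)" using assms by blast
  hence P: "d \<le> u0 (j - 1 + int (Suc n))" by (simp add: algebra_simps)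
  have "level_dist u0 d (j - 1) = Suc (LEAST m. d \<le> u0 (j - 1 + int (Suc m)))"
    unfolding level_dist_def
    by (rule Least_Suc[where P="\<lambda>m. d \<le> u0 (j - 1 + int m)", OF P]) (use False in simp)
  also have "(\<lambda>m. d \<le> u0 (j - 1 + int (Suc m))) = (\<lambda>m. d \<le> u0 (j + int m))"
    by (simp add: algebra_simps)
  finally show ?thesis using False by (simp add: level_dist_def)
qed

lemma level_dist_neighbours:
  assumes "\<And>j. \<exists>n. d \<le> u0 (j + int n)"
  shows "level_dist u0 d j = 0 \<or>
           (level_dist u0 d (j + 1) = level_dist u0 d j - 1 \<and>
            (level_dist u0 d (j - 1) = 0 \<or> level_dist u0 d (j - 1) = level_dist u0 d j + 1))"
proof (cases "level_dist u0 d j = 0")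
  case False
  have "level_dist u0 d j = (if d \<le> u0 j then 0 else Suc (level_dist u0 d (j + 1)))"
    using level_dist_diff[OF assms, of "j + 1"] by simp
  hence "level_dist u0 d (j + 1) = level_dist u0 d j - 1" using False by (auto split: if_splits)
  moreover have "level_dist u0 d (j - 1) = 0 \<or> level_dist u0 d (j - 1) = level_dist u0 d j + 1"
    using level_dist_diff[OF assms, of j] by auto
  ultimately show ?thesis by blast
qed simp

section \<open>The barrier\<close>

definition holder_exp :: "real \<Rightarrow> real" where
  "holder_exp \<beta> = 1 / (1 - \<beta>)"

lemma holder_exp_pos: "\<beta> < 0 \<Longrightarrow> 0 < holder_exp \<beta>"
  and holder_exp_less_1: "\<beta> < 0 \<Longrightarrow> holder_exp \<beta> < 1"
  and holder_exp_mult: "\<beta> < 0 \<Longrightarrow> holder_exp \<beta> * \<beta> = holder_exp \<beta> - 1"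
  by (auto simp: holder_exp_def field_simps)

text \<open>A subsolution indexed by the distance \<open>m \<le> N\<close> to the nearest site at or to the right of it
  where the datum is at least \<open>d\<close>. For \<open>m \<ge> 1\<close> it is the self-similar profile \<open>c\<^sub>m t\<^sup>\<alpha>\<close>, \<open>\<alpha> = 1/(1-\<beta>)\<close>,
  whose \<open>\<beta>\<close>-th power \<open>m (2N + 1 - m) t\<^sup>\<alpha>\<^sup>-\<^sup>1\<close> is strictly concave in \<open>m\<close>; at \<open>m = 0\<close> it starts from \<open>d\<close>
  and decreases slowly enough to stay above \<open>d / 2\<close> up to time \<open>barrier_time\<close>.\<close>

definition barrier_weight :: "nat \<Rightarrow> nat \<Rightarrow> real" where
  "barrier_weight N m = real m * (2 * real N + 1 - real m)"

definition barrier_pow_bound :: "nat \<Rightarrow> nat \<Rightarrow> real" where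
  "barrier_pow_bound N m = (if m = 0 then 1 else barrier_weight N m)"

definition weight_max :: "nat \<Rightarrow> real" where
  "weight_max N = (2 * real N + 1)\<^sup>2"

definition barrier_drift :: "real \<Rightarrow> nat \<Rightarrow> real" where
  "barrier_drift \<beta> N = 2 * weight_max N / holder_exp \<beta>"

definition barrier :: "real \<Rightarrow> real \<Rightarrow> nat \<Rightarrow> nat \<Rightarrow> real \<Rightarrow> real" where
  "barrier \<beta> d N m t = (if m = 0 then d - barrier_drift \<beta> N * t powr holder_exp \<beta>
                        else barrier_weight N m powr (1 / \<beta>) * t powr holder_exp \<beta>)"

definition barrier_deriv :: "real \<Rightarrow> real \<Rightarrow> nat \<Rightarrow> nat \<Rightarrow> real \<Rightarrow> real" where
  "barrier_deriv \<beta> d N m t =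
     (if m = 0 then - barrier_drift \<beta> N * (holder_exp \<beta> * t powr (holder_exp \<beta> - 1))
      else barrier_weight N m powr (1 / \<beta>) * (holder_exp \<beta> * t powr (holder_exp \<beta> - 1)))"

definition barrier_time :: "real \<Rightarrow> real \<Rightarrow> nat \<Rightarrow> real" where
  "barrier_time \<beta> d N = (d / (2 * (barrier_drift \<beta> N + 1))) powr (1 - \<beta>)"

lemma barrier_drift_nonneg: "\<beta> < 0 \<Longrightarrow> 0 \<le> barrier_drift \<beta> N"
  by (auto simp: barrier_drift_def weight_max_def intro!: divide_nonneg_pos holder_exp_pos)

lemma barrier_time_pos: "0 < d \<Longrightarrow> \<beta> < 0 \<Longrightarrow> 0 < barrier_time \<beta> d N"
  using barrier_drift_nonneg[of \<beta> N] by (simp add: barrier_time_def)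

lemma barrier_weight_bounds:
  assumes "1 \<le> m" "m \<le> N"
  shows "1 \<le> barrier_weight N m" "barrier_weight N m \<le> weight_max N"
proof -
  have a: "1 \<le> real m" "real m \<le> real N" using assms by auto
  have b: "1 \<le> 2 * real N + 1 - real m" using a by simp
  show "1 \<le> barrier_weight N m" unfolding barrier_weight_def using mult_mono[OF a(1) b] by simp
  have "barrier_weight N m \<le> (2 * real N + 1) * (2 * real N + 1 - real m)"
    unfolding barrier_weight_def using a by (intro mult_right_mono) auto
  also have "\<dots> \<le> (2 * real N + 1) * (2 * real N + 1)"
    using a by (intro mult_left_mono) auto
  finally show "barrier_weight N m \<le> weight_max N" by (simp add: weight_max_def power2_eq_square)
qed

lemma barrier_pow_bound_bounds:
  assumes "m \<le> N"
  shows "1 \<le> barrier_pow_bound N m" "barrier_pow_bound N m \<le> weight_max N"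
  using barrier_weight_bounds[of m N] assms by (auto simp: barrier_pow_bound_def weight_max_def)

lemma barrier_weight_concave:
  assumes "1 \<le> m" "m \<le> N" "ml \<le> N" "ml = 0 \<or> ml = m + 1"
  shows "1 \<le> 2 * barrier_weight N m - barrier_pow_bound N (m - 1) - barrier_pow_bound N ml"
proof -
  have g: "1 \<le> barrier_weight N m" using barrier_weight_bounds assms by blast
  have D1: "barrier_weight N m - barrier_weight N (m - 1) = 2 * real N + 2 - 2 * real m"
    and D2: "barrier_weight N (m + 1) - barrier_weight N m = 2 * real N - 2 * real m"
    using assms(1) by (simp_all add: barrier_weight_def of_nat_diff algebra_simps)
  show ?thesis
  proof (cases "m = 1")
    case True
    moreover have "barrier_weight N 1 = 2 * real N" by (simp add: barrier_weight_def)
    ultimately show ?thesis using assms D2 by (auto simp: barrier_pow_bound_def)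
  next
    case False
    thus ?thesis using assms g D1 D2 by (auto simp: barrier_pow_bound_def)
  qed
qed

lemma barrier_time_le:
  assumes b: "\<beta> < 0" and d: "0 < d" and t: "0 < t" "t \<le> barrier_time \<beta> d N"
  shows "t powr holder_exp \<beta> \<le> d / (2 * (barrier_drift \<beta> N + 1))"
    "(d / 2) powr \<beta> \<le> t powr (holder_exp \<beta> - 1)"
proof -
  define q where "q = d / (2 * (barrier_drift \<beta> N + 1))"
  have "q \<le> d / 2"
    unfolding q_def by (rule divide_left_mono) (use d barrier_drift_nonneg[OF b, of N] in auto)
  hence q: "0 < q" "q \<le> d / 2" using d barrier_drift_nonneg[OF b, of N] unfolding q_def by auto
  have e1: "(1 - \<beta>) * holder_exp \<beta> = 1" and e2: "(1 - \<beta>) * (holder_exp \<beta> - 1) = \<beta>"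
    using b by (auto simp: holder_exp_def field_simps)
  have "t powr holder_exp \<beta> \<le> (q powr (1 - \<beta>)) powr holder_exp \<beta>"
    using t holder_exp_pos[OF b] by (intro powr_mono2) (auto simp: q_def barrier_time_def)
  also have "\<dots> = q" using q e1 by (simp add: powr_powr)
  finally show "t powr holder_exp \<beta> \<le> d / (2 * (barrier_drift \<beta> N + 1))" by (simp add: q_def)
  have "(d / 2) powr \<beta> \<le> q powr \<beta>" using powr_mono2'[of \<beta> q "d / 2"] q b by simp
  also have "\<dots> = (q powr (1 - \<beta>)) powr (holder_exp \<beta> - 1)" using e2 by (simp add: powr_powr)
  also have "\<dots> \<le> t powr (holder_exp \<beta> - 1)"
    using powr_mono2'[of "holder_exp \<beta> - 1" t "q powr (1 - \<beta>)"] t holder_exp_less_1[OF b]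
    by (simp add: q_def barrier_time_def)
  finally show "(d / 2) powr \<beta> \<le> t powr (holder_exp \<beta> - 1)" .
qed

lemma barrier_powr:
  assumes b: "\<beta> < 0" and t: "0 < t" and m: "1 \<le> m" "m \<le> N"
  shows "barrier \<beta> d N m t powr \<beta> = barrier_weight N m * t powr (holder_exp \<beta> - 1)"
proof -
  have g: "barrier_weight N m \<ge> 1" using barrier_weight_bounds m by blast
  have "barrier \<beta> d N m t powr \<beta>
      = (barrier_weight N m powr (1 / \<beta>)) powr \<beta> * (t powr holder_exp \<beta>) powr \<beta>"
    using m by (simp add: barrier_def powr_mult)
  also have "\<dots> = barrier_weight N m * t powr (holder_exp \<beta> - 1)"
    using g b holder_exp_mult[OF b] by (simp add: powr_powr)
  finally show ?thesis .
qed

lemma barrier_0_bounds: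
  assumes b: "\<beta> < 0" and d: "0 < d" and t: "0 < t" "t \<le> barrier_time \<beta> d N"
  shows "d / 2 \<le> barrier \<beta> d N 0 t" "barrier \<beta> d N 0 t \<le> d"
    "t powr holder_exp \<beta> \<le> d / 2" "barrier \<beta> d N 0 t powr \<beta> \<le> t powr (holder_exp \<beta> - 1)"
proof -
  note T = barrier_time_le[OF b d t] and D = barrier_drift_nonneg[OF b, of N]
  have "barrier_drift \<beta> N * t powr holder_exp \<beta>
      \<le> (barrier_drift \<beta> N + 1) * (d / (2 * (barrier_drift \<beta> N + 1)))"
    using T(1) D by (intro mult_mono) auto
  also have "\<dots> = d / 2" using D by (simp add: field_simps)
  finally show F: "d / 2 \<le> barrier \<beta> d N 0 t" by (simp add: barrier_def)
  show "barrier \<beta> d N 0 t \<le> d" using D by (simp add: barrier_def)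
  have "d / (2 * (barrier_drift \<beta> N + 1)) \<le> d / 2" using D d by (intro divide_left_mono) auto
  thus "t powr holder_exp \<beta> \<le> d / 2" using T(1) by linarith
  have "barrier \<beta> d N 0 t powr \<beta> \<le> (d / 2) powr \<beta>"
    using powr_mono2'[of \<beta> "d / 2" "barrier \<beta> d N 0 t"] F b d by simp
  thus "barrier \<beta> d N 0 t powr \<beta> \<le> t powr (holder_exp \<beta> - 1)" using T(2) by simp
qed

lemma barrier_bounds:
  assumes b: "\<beta> < 0" and d: "0 < d" and t: "0 < t" "t \<le> barrier_time \<beta> d N" and m: "m \<le> N"
  shows "barrier \<beta> d N m t powr \<beta> \<le> barrier_pow_bound N m * t powr (holder_exp \<beta> - 1)"
    "0 < barrier \<beta> d N m t" "barrier \<beta> d N m t \<le> d"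
    "weight_max N powr (1 / \<beta>) * t powr holder_exp \<beta> \<le> barrier \<beta> d N m t"
proof -
  have c1: "weight_max N powr (1 / \<beta>) \<le> 1"
    using powr_mono2'[of "1 / \<beta>" 1 "weight_max N"] b by (simp add: weight_max_def)
  note F0 = barrier_0_bounds[OF b d t]
  have "barrier \<beta> d N m t powr \<beta> \<le> barrier_pow_bound N m * t powr (holder_exp \<beta> - 1) \<and>
    0 < barrier \<beta> d N m t \<and> barrier \<beta> d N m t \<le> d \<and>
    weight_max N powr (1 / \<beta>) * t powr holder_exp \<beta> \<le> barrier \<beta> d N m t"
  proof (cases "m = 0")
    case True
    have "weight_max N powr (1 / \<beta>) * t powr holder_exp \<beta> \<le> 1 * t powr holder_exp \<beta>"
      using c1 by (intro mult_right_mono) auto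
    thus ?thesis using F0 True d by (simp add: barrier_pow_bound_def)
  next
    case False
    hence m1: "1 \<le> m" by simp
    have g: "1 \<le> barrier_weight N m" "barrier_weight N m \<le> weight_max N"
      using barrier_weight_bounds[OF m1 m] by auto
    have "barrier_weight N m powr (1 / \<beta>) \<le> 1"
      using powr_mono2'[of "1 / \<beta>" 1 "barrier_weight N m"] b g by simp
    hence "barrier \<beta> d N m t \<le> 1 * t powr holder_exp \<beta>"
      using False mult_right_mono[of _ 1 "t powr holder_exp \<beta>"] by (simp add: barrier_def)
    hence "barrier \<beta> d N m t \<le> d" using F0(3) d by linarith
    moreover have "weight_max N powr (1 / \<beta>) \<le> barrier_weight N m powr (1 / \<beta>)"
      using powr_mono2'[of "1 / \<beta>" "barrier_weight N m" "weight_max N"] b g by simp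
    hence "weight_max N powr (1 / \<beta>) * t powr holder_exp \<beta> \<le> barrier \<beta> d N m t"
      using False by (simp add: barrier_def mult_right_mono)
    moreover have "0 < barrier \<beta> d N m t" using False g t by (simp add: barrier_def)
    ultimately show ?thesis
      using False barrier_powr[OF b t(1) m1 m] by (simp add: barrier_pow_bound_def)
  qed
  thus "barrier \<beta> d N m t powr \<beta> \<le> barrier_pow_bound N m * t powr (holder_exp \<beta> - 1)"
    "0 < barrier \<beta> d N m t" "barrier \<beta> d N m t \<le> d"
    "weight_max N powr (1 / \<beta>) * t powr holder_exp \<beta> \<le> barrier \<beta> d N m t" by auto
qed

lemma barrier_subsolution:
  assumes b: "\<beta> < 0" and d: "0 < d" and t: "0 < t" "t \<le> barrier_time \<beta> d N"
    and m: "m \<le> N" "ml \<le> N" "mr \<le> N"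
    and st: "m = 0 \<or> (mr = m - 1 \<and> (ml = 0 \<or> ml = m + 1))"
  shows "barrier_deriv \<beta> d N m t
           \<le> 2 * barrier \<beta> d N m t powr \<beta> - barrier \<beta> d N ml t powr \<beta> - barrier \<beta> d N mr t powr \<beta>"
proof -
  define T where "T = t powr (holder_exp \<beta> - 1)"
  have T0: "T > 0" using t by (simp add: T_def)
  have pl: "barrier \<beta> d N ml t powr \<beta> \<le> barrier_pow_bound N ml * T"
    and pr: "barrier \<beta> d N mr t powr \<beta> \<le> barrier_pow_bound N mr * T"
    using barrier_bounds(1)[OF b d t] m by (auto simp: T_def)
  show ?thesis
  proof (cases "m = 0")
    case True
    have "barrier_deriv \<beta> d N m t = - 2 * weight_max N * T"
      using True holder_exp_pos[OF b] by (simp add: barrier_deriv_def barrier_drift_def T_def)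
    moreover have "barrier_pow_bound N ml * T \<le> weight_max N * T"
      "barrier_pow_bound N mr * T \<le> weight_max N * T"
      using barrier_pow_bound_bounds m T0 by (auto intro!: mult_right_mono)
    moreover have "0 \<le> barrier \<beta> d N m t powr \<beta>" by simp
    ultimately show ?thesis using pl pr by linarith
  next
    case False
    hence m1: "1 \<le> m" by simp
    have st': "mr = m - 1" "ml = 0 \<or> ml = m + 1" using st False by auto
    have g: "1 \<le> barrier_weight N m" using barrier_weight_bounds m1 m by blast
    have a1: "barrier_weight N m powr (1 / \<beta>) \<le> 1"
      using powr_mono2'[of "1 / \<beta>" 1 "barrier_weight N m"] b g by simp
    have "barrier_deriv \<beta> d N m t = barrier_weight N m powr (1 / \<beta>) * holder_exp \<beta> * T"
      using False by (simp add: barrier_deriv_def T_def)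
    also have "\<dots> \<le> 1 * 1 * T"
      using a1 holder_exp_pos[OF b] holder_exp_less_1[OF b] T0 by (intro mult_right_mono mult_mono) auto
    also have "\<dots> \<le> (2 * barrier_weight N m - barrier_pow_bound N (m - 1) - barrier_pow_bound N ml) * T"
      using barrier_weight_concave[OF m1 m(1,2) st'(2)] T0 by (intro mult_right_mono) auto
    also have "\<dots> = 2 * (barrier_weight N m * T) - barrier_pow_bound N ml * T - barrier_pow_bound N mr * T"
      using st' by (simp add: algebra_simps)
    also have "\<dots> \<le> 2 * barrier \<beta> d N m t powr \<beta> - barrier \<beta> d N ml t powr \<beta> - barrier \<beta> d N mr t powr \<beta>"
      using barrier_powr[OF b t(1) m1 m(1)] pl pr by (simp add: T_def)
    finally show ?thesis .
  qed
qed

lemma barrier_has_real_derivative: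
  "0 < t \<Longrightarrow> ((\<lambda>t. barrier \<beta> d N m t) has_real_derivative barrier_deriv \<beta> d N m t) (at t)"
  unfolding barrier_def barrier_deriv_def by (cases "m = 0") (auto intro!: derivative_eq_intros)

lemma continuous_on_barrier:
  "\<beta> < 0 \<Longrightarrow> continuous_on {0..T} (\<lambda>t. barrier \<beta> d N m t)"
  using continuous_on_powr_pos_exponent[OF holder_exp_pos, of \<beta> T] unfolding barrier_def
  by (cases "m = 0") (auto intro!: continuous_intros)

lemma barrier_minus_dlap_le:
  fixes v :: "int \<Rightarrow> real"
  assumes b: "\<beta> < 0" and d: "0 < d" and t: "0 < t" "t \<le> barrier_time \<beta> d N"
    and m: "m \<le> N" "ml \<le> N" "mr \<le> N"
    and st: "m = 0 \<or> (mr = m - 1 \<and> (ml = 0 \<or> ml = m + 1))"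
    and \<delta>: "0 < \<delta>" "\<And>i. \<delta> \<le> v i" and below: "v k < barrier \<beta> d N m t"
  shows "barrier_deriv \<beta> d N m t - dlap (\<lambda>i. G \<beta> (v i)) k
           \<le> (- \<beta> * \<delta> powr (\<beta> - 1)) * (max 0 (barrier \<beta> d N ml t - v (k - 1))
                                       + max 0 (barrier \<beta> d N mr t - v (k + 1)))"
proof -
  have pos: "0 < barrier \<beta> d N n t" if "n \<le> N" for n using barrier_bounds(2)[OF b d t that] .
  have "barrier \<beta> d N m t powr \<beta> \<le> v k powr \<beta>"
    using powr_mono2'[of \<beta> "v k" "barrier \<beta> d N m t"] b below \<delta>(1) \<delta>(2)[of k] by simp
  moreover have "v (k - 1) powr \<beta> - barrier \<beta> d N ml t powr \<beta>
      \<le> (- \<beta> * \<delta> powr (\<beta> - 1)) * max 0 (barrier \<beta> d N ml t - v (k - 1))"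
    "v (k + 1) powr \<beta> - barrier \<beta> d N mr t powr \<beta>
      \<le> (- \<beta> * \<delta> powr (\<beta> - 1)) * max 0 (barrier \<beta> d N mr t - v (k + 1))"
    using powr_neg_diff_le[OF b \<delta>(1) \<delta>(2) pos] m by auto
  ultimately show ?thesis
    using barrier_subsolution[OF b d t m st] by (simp add: dlap_G distrib_left)
qed

section \<open>Lower bound and Hoelder estimate\<close>

lemma solution_lower_bound:
  assumes b: "\<beta> < 0" and d: "0 < d" and \<delta>: "0 < \<delta>" and u0: "u0 \<in> P_set L d"
    and sol: "is_solution \<beta> (\<lambda>k. max (u0 k) \<delta>) u"
    and lb: "\<And>t k. 0 \<le> t \<Longrightarrow> \<delta> \<le> u t k"
    and t: "0 < t" "t \<le> barrier_time \<beta> d (L - 1)"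
  shows "weight_max (L - 1) powr (1 / \<beta>) * t powr holder_exp \<beta> \<le> u t k"
proof -
  define N where "N = L - 1"
  define lv where "lv = level_dist u0 d"
  have W: "\<And>k. \<exists>l. k < l \<and> l \<le> k + int L \<and> d \<le> u0 l" using P_set_level_within[OF u0] by blast
  note ex = P_set_level_ahead[OF u0]
  have lvN: "lv j \<le> N" for j using level_dist_less[OF W, of j] by (simp add: N_def lv_def)
  define \<Lambda> where "\<Lambda> = - \<beta> * \<delta> powr (\<beta> - 1)"
  have \<Lambda>: "\<Lambda> > 0" using b \<delta> unfolding \<Lambda>_def by (intro mult_pos_pos) auto
  define e where "e = (\<lambda>t j. barrier \<beta> d N (lv j) t - u t j)"
  have "e t k \<le> 0"
  proof (rule lattice_comparison[OF \<Lambda>, where e=e and B=d and T="barrier_time \<beta> d N"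
        and D="\<lambda>t j. barrier_deriv \<beta> d N (lv j) t - dlap (\<lambda>i. G \<beta> (u t i)) j"])
    show "continuous_on {0..barrier_time \<beta> d N} (\<lambda>t. e t j)" for j
      unfolding e_def by (intro continuous_intros continuous_on_barrier[OF b] is_solution_continuous_on[OF sol])
    show "((\<lambda>t. e t j) has_real_derivative
            barrier_deriv \<beta> d N (lv j) t - dlap (\<lambda>i. G \<beta> (u t i)) j) (at t)"
      if "0 < t" "t < barrier_time \<beta> d N" for j t
      unfolding e_def
      by (intro derivative_intros barrier_has_real_derivative is_solution_has_real_derivative[OF sol] that(1))
    show "e t j \<le> d" if "0 \<le> t" "t \<le> barrier_time \<beta> d N" for j t
    proof -
      have "barrier \<beta> d N (lv j) t \<le> d"
      proof (cases "t = 0")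
        case True thus ?thesis using d by (simp add: barrier_def)
      next
        case False thus ?thesis using barrier_bounds(3)[OF b d _ that(2) lvN] that(1) by simp
      qed
      thus ?thesis using lb[OF that(1), of j] \<delta> by (simp add: e_def)
    qed
    show "e 0 j \<le> 0" for j
    proof -
      have "u 0 j = max (u0 j) \<delta>" using sol by (simp add: is_solution_def)
      thus ?thesis
        using level_dist_eq_0_iff[OF ex[of j]] \<delta> by (auto simp: e_def barrier_def lv_def)
    qed
    fix j t assume tt: "0 < t" "t < barrier_time \<beta> d N" and above: "e t j > 0"
    note st = level_dist_neighbours[OF ex, of j, folded lv_def]
    show "barrier_deriv \<beta> d N (lv j) t - dlap (\<lambda>i. G \<beta> (u t i)) j
            \<le> \<Lambda> * (max 0 (e t (j - 1)) + max 0 (e t (j + 1)))"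
      unfolding \<Lambda>_def e_def
    proof (rule barrier_minus_dlap_le[OF b d tt(1) _ lvN lvN lvN st \<delta>])
      show "t \<le> barrier_time \<beta> d N" using tt by simp
      show "\<delta> \<le> u t i" for i using lb tt by simp
      show "u t j < barrier \<beta> d N (lv j) t" using above by (simp add: e_def)
    qed
  qed (use t in \<open>auto simp: N_def\<close>)
  moreover have "weight_max N powr (1 / \<beta>) * t powr holder_exp \<beta> \<le> barrier \<beta> d N (lv k) t"
    using barrier_bounds(4)[OF b d t(1) _ lvN] t by (simp add: N_def)
  ultimately show ?thesis by (simp add: e_def N_def)
qed

lemma solution_increment_upper:
  assumes b: "\<beta> < 0" and sol: "is_solution \<beta> v0 u"
    and pos: "\<And>t k. 0 \<le> t \<Longrightarrow> 0 < u t k"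
    and tt: "0 \<le> t1" "t1 \<le> t2"
  shows "u t2 k - u t1 k \<le> (2 * (1 - \<beta>)) powr holder_exp \<beta> * (t2 - t1) powr holder_exp \<beta>"
proof -
  define \<alpha> where "\<alpha> = holder_exp \<beta>"
  define K where "K = 2 * (1 - \<beta>)"
  have \<alpha>: "0 < \<alpha>" "\<alpha> \<le> 1" using holder_exp_pos[OF b] holder_exp_less_1[OF b] by (auto simp: \<alpha>_def)
  have "K * t1 - u t1 k powr (1 - \<beta>) \<le> K * t2 - u t2 k powr (1 - \<beta>)"
  proof (rule DERIV_nonneg_imp_increasing_open[where f="\<lambda>s. K * s - u s k powr (1 - \<beta>)"])
    have "continuous_on {t1..t2} (\<lambda>s. u s k)"
      using is_solution_continuous_on[OF sol] by (rule continuous_on_subset) (use tt in auto)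
    moreover have "u x k \<noteq> 0" if "x \<in> {t1..t2}" for x using pos[of x k] that tt by auto
    ultimately show "continuous_on {t1..t2} (\<lambda>s. K * s - u s k powr (1 - \<beta>))"
      by (intro continuous_intros) auto
    fix s assume s: "t1 < s" "s < t2"
    hence s0: "0 < s" using tt by simp
    define u' where "u' = dlap (\<lambda>i. G \<beta> (u s i)) k"
    have "((\<lambda>s. K * s - u s k powr (1 - \<beta>)) has_real_derivative
            K - (1 - \<beta>) * u s k powr (1 - \<beta> - 1) * u') (at s)"
      using DERIV_fun_powr[OF is_solution_has_real_derivative[OF sol s0] pos[of s k], of "1 - \<beta>"] s0
      by (auto intro!: DERIV_diff DERIV_cmult_right simp: u'_def)
    moreover have "(1 - \<beta>) * u s k powr (- \<beta>) * u' \<le> K"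
    proof -
      have "u' \<le> 2 * u s k powr \<beta>"
        unfolding u'_def dlap_G using powr_ge_zero[of "u s (k - 1)" \<beta>] powr_ge_zero[of "u s (k + 1)" \<beta>]
        by linarith
      hence "(1 - \<beta>) * u s k powr (- \<beta>) * u' \<le> (1 - \<beta>) * u s k powr (- \<beta>) * (2 * u s k powr \<beta>)"
        using b by (intro mult_left_mono) auto
      also have "\<dots> = 2 * (1 - \<beta>) * (u s k powr (- \<beta>) * u s k powr \<beta>)" by simp
      also have "u s k powr (- \<beta>) * u s k powr \<beta> = 1"
        using pos[of s k] s0 by (simp add: powr_add[symmetric])
      finally show ?thesis by (simp add: K_def)
    qed
    ultimately show "\<exists>y. ((\<lambda>s. K * s - u s k powr (1 - \<beta>)) has_real_derivative y) (at s) \<and> 0 \<le> y"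
      by force
  qed (use tt in simp)
  hence step: "u t2 k powr (1 - \<beta>) \<le> u t1 k powr (1 - \<beta>) + K * (t2 - t1)" by (simp add: algebra_simps)
  have inv: "(x powr (1 - \<beta>)) powr \<alpha> = x" if "0 < x" for x
    using that b by (simp add: powr_powr \<alpha>_def holder_exp_def)
  have "u t2 k = (u t2 k powr (1 - \<beta>)) powr \<alpha>" using inv pos tt by simp
  also have "\<dots> \<le> (u t1 k powr (1 - \<beta>) + K * (t2 - t1)) powr \<alpha>"
    using step \<alpha> by (intro powr_mono2) auto
  also have "\<dots> \<le> (u t1 k powr (1 - \<beta>)) powr \<alpha> + (K * (t2 - t1)) powr \<alpha>"
    using \<alpha> b tt by (intro powr_add_le_add_powr) (auto simp: K_def)
  also have "\<dots> = u t1 k + K powr \<alpha> * (t2 - t1) powr \<alpha>"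
    using inv pos tt by (simp add: powr_mult K_def)
  finally show ?thesis by (simp add: K_def \<alpha>_def)
qed

text \<open>A lower bound \<open>u \<ge> c s\<^sup>\<alpha>\<close> gives \<open>\<partial>\<^sub>t u \<ge> -2 c\<^sup>\<beta> s\<^sup>\<alpha>\<^sup>-\<^sup>1\<close>, so \<open>u + (2 c\<^sup>\<beta> / \<alpha>) s\<^sup>\<alpha>\<close> is
  nondecreasing; subadditivity of \<open>s\<^sup>\<alpha>\<close> finishes the proof.\<close>

lemma solution_increment_lower:
  assumes b: "\<beta> < 0" and sol: "is_solution \<beta> v0 u" and c: "0 < c"
    and lb: "\<And>s i. 0 < s \<Longrightarrow> s \<le> T \<Longrightarrow> c * s powr holder_exp \<beta> \<le> u s i"
    and tt: "0 \<le> t1" "t1 \<le> t2" "t2 \<le> T"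
  shows "u t1 k - u t2 k \<le> 2 * c powr \<beta> / holder_exp \<beta> * (t2 - t1) powr holder_exp \<beta>"
proof -
  define \<alpha> where "\<alpha> = holder_exp \<beta>"
  define Q where "Q = 2 * c powr \<beta> / \<alpha>"
  have \<alpha>: "0 < \<alpha>" "\<alpha> \<le> 1" "\<alpha> * \<beta> = \<alpha> - 1"
    using holder_exp_pos[OF b] holder_exp_less_1[OF b] holder_exp_mult[OF b] by (auto simp: \<alpha>_def)
  have "u t1 k + Q * t1 powr \<alpha> \<le> u t2 k + Q * t2 powr \<alpha>"
  proof (rule DERIV_nonneg_imp_increasing_open[where f="\<lambda>s. u s k + Q * s powr \<alpha>"])
    have "continuous_on {t1..t2} (\<lambda>s. u s k)"
      using is_solution_continuous_on[OF sol] by (rule continuous_on_subset) (use tt in auto)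
    moreover have "continuous_on {t1..t2} (\<lambda>s. s powr \<alpha>)"
      using continuous_on_powr_pos_exponent[OF \<alpha>(1)] by (rule continuous_on_subset) (use tt in auto)
    ultimately show "continuous_on {t1..t2} (\<lambda>s. u s k + Q * s powr \<alpha>)"
      by (intro continuous_on_add continuous_on_mult continuous_on_const)
    fix s assume s: "t1 < s" "s < t2"
    hence s0: "0 < s" using tt by simp
    have der: "((\<lambda>s. u s k + Q * s powr \<alpha>) has_real_derivative
            dlap (\<lambda>i. G \<beta> (u s i)) k + Q * (\<alpha> * s powr (\<alpha> - 1))) (at s)"
      using is_solution_has_real_derivative[OF sol s0, of k] s0 by (auto intro!: derivative_eq_intros)
    have pb: "u s i powr \<beta> \<le> c powr \<beta> * s powr (\<alpha> - 1)" for i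
    proof -
      have "c * s powr \<alpha> \<le> u s i" using lb[OF s0, of i] s tt by (simp add: \<alpha>_def)
      hence "u s i powr \<beta> \<le> (c * s powr \<alpha>) powr \<beta>" using powr_mono2'[of \<beta>] b c s0 by simp
      also have "\<dots> = c powr \<beta> * s powr (\<alpha> - 1)" using \<alpha> by (simp add: powr_mult powr_powr)
      finally show ?thesis .
    qed
    have "- 2 * (c powr \<beta> * s powr (\<alpha> - 1)) \<le> dlap (\<lambda>i. G \<beta> (u s i)) k"
      unfolding dlap_G using pb[of "k - 1"] pb[of "k + 1"] powr_ge_zero[of "u s k" \<beta>] by linarith
    moreover have "Q * (\<alpha> * s powr (\<alpha> - 1)) = 2 * (c powr \<beta> * s powr (\<alpha> - 1))"
      using \<alpha> by (simp add: Q_def)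
    ultimately have "0 \<le> dlap (\<lambda>i. G \<beta> (u s i)) k + Q * (\<alpha> * s powr (\<alpha> - 1))" by linarith
    with der show "\<exists>y. ((\<lambda>s. u s k + Q * s powr \<alpha>) has_real_derivative y) (at s) \<and> 0 \<le> y"
      by blast
  qed (use tt in simp)
  moreover have "Q * t2 powr \<alpha> \<le> Q * (t1 powr \<alpha> + (t2 - t1) powr \<alpha>)"
    using powr_add_le_add_powr[of t1 "t2 - t1" \<alpha>] \<alpha> tt by (intro mult_left_mono) (auto simp: Q_def)
  ultimately have "u t1 k - u t2 k \<le> Q * (t2 - t1) powr \<alpha>" by (simp add: distrib_left)
  thus ?thesis unfolding Q_def \<alpha>_def .
qed

definition holder_const :: "real \<Rightarrow> nat \<Rightarrow> real" where
  "holder_const \<beta> L = max ((2 * (1 - \<beta>)) powr holder_exp \<beta>)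
                          (2 * (weight_max (L - 1) powr (1 / \<beta>)) powr \<beta> / holder_exp \<beta>)"

lemma solution_holder:
  assumes b: "\<beta> < 0" and d: "0 < d" and \<delta>: "0 < \<delta>" and u0: "u0 \<in> P_set L d"
    and sol: "is_solution \<beta> (\<lambda>k. max (u0 k) \<delta>) u"
    and lb: "\<And>t k. 0 \<le> t \<Longrightarrow> \<delta> \<le> u t k"
    and tt: "0 \<le> t1" "t1 \<le> t2" "t2 \<le> barrier_time \<beta> d (L - 1)"
  shows "\<bar>u t2 k - u t1 k\<bar> \<le> holder_const \<beta> L * (t2 - t1) powr holder_exp \<beta>"
proof -
  have "0 < weight_max (L - 1) powr (1 / \<beta>)" by (simp add: weight_max_def)
  have "u t2 k - u t1 k \<le> (2 * (1 - \<beta>)) powr holder_exp \<beta> * (t2 - t1) powr holder_exp \<beta>"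
    using solution_increment_upper[OF b sol _ tt(1,2)] lb \<delta> by (meson less_le_trans)
  moreover have "u t1 k - u t2 k
      \<le> 2 * (weight_max (L - 1) powr (1 / \<beta>)) powr \<beta> / holder_exp \<beta> * (t2 - t1) powr holder_exp \<beta>"
    using solution_increment_lower[OF b sol \<open>0 < weight_max (L - 1) powr (1 / \<beta>)\<close>
        solution_lower_bound[OF b d \<delta> u0 sol lb] tt] .
  ultimately show ?thesis
    unfolding holder_const_def by (smt (verit) mult_right_mono powr_ge_zero)
qed

theorem corollaryA11:
  fixes \<beta> d :: real and L :: nat
  assumes "\<beta> < 0" and "d > 0"
  shows "\<exists>tstar C. tstar > 0 \<and>
    (\<forall>u0 \<in> P_set L d. \<forall>\<delta> > 0. \<forall>u :: real \<Rightarrow> int \<Rightarrow> real.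
       is_solution \<beta> (\<lambda>k. max (u0 k) \<delta>) u \<longrightarrow>
       (\<forall>t\<ge>0. \<forall>k. \<delta> \<le> u t k \<and> u t k \<le> supnorm (\<lambda>k. max (u0 k) \<delta>)) \<longrightarrow>
       (\<forall>t1 \<in> {0..tstar}. \<forall>t2 \<in> {0..tstar}. \<forall>k.
          \<bar>u t2 k - u t1 k\<bar> \<le> C * \<bar>t2 - t1\<bar> powr (1 / (1 - \<beta>))))"
proof (rule exI[of _ "barrier_time \<beta> d (L - 1)"], rule exI[of _ "holder_const \<beta> L"],
    intro conjI ballI allI impI)
  show "0 < barrier_time \<beta> d (L - 1)" using barrier_time_pos assms by blast
  fix u0 \<delta> u t1 t2 k
  assume u0: "u0 \<in> P_set L d" and \<delta>: "0 < \<delta>" and sol: "is_solution \<beta> (\<lambda>k. max (u0 k) \<delta>) u"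
    and bnd: "\<forall>t\<ge>0. \<forall>k. \<delta> \<le> u t k \<and> u t k \<le> supnorm (\<lambda>k. max (u0 k) \<delta>)"
    and t1: "t1 \<in> {0..barrier_time \<beta> d (L - 1)}" and t2: "t2 \<in> {0..barrier_time \<beta> d (L - 1)}"
  note holder = solution_holder[OF assms \<delta> u0 sol, unfolded holder_exp_def]
  have lb: "\<And>t k. 0 \<le> t \<Longrightarrow> \<delta> \<le> u t k" using bnd by blast
  show "\<bar>u t2 k - u t1 k\<bar> \<le> holder_const \<beta> L * \<bar>t2 - t1\<bar> powr (1 / (1 - \<beta>))"
  proof (cases "t1 \<le> t2")
    case True
    thus ?thesis using holder[OF lb, of t1 t2 k] t1 t2 by simp
  next
    case False
    thus ?thesis using holder[OF lb, of t2 t1 k] t1 t2 by (simp add: abs_minus_commute)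
  qed
qed

end
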